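(* Let $x=(x_1,\dots,x_n)$ and $y=(y_1,\dots,y_n)$ be vectors with nonnegative real entries, and assume $y$ is not a permutation of $x$ (i.e., the multisets $\{x_1,\dots,x_n\}$ and $\{y_1,\dots,y_n\}$ differ). Write $\tilde z=(1+z_1,\dots,1+z_n)$ for a vector $z$. If $x\prec_{\log} y$, then $\tilde x\prec_{\mathrm{wlog}}\tilde y$ but $\tilde x\not\prec_{\log}\tilde y$. Consequently, $$\prod_{k=1}^n(1+x_k)<\prod_{k=1}^n(1+y_k).$$ *)

theory Defs
  imports Complex_Main "HOL-Library.Multiset"
begin

definition decr :: "real list \<Rightarrow> real list" where
  "decr xs = rev (sort xs)"

definition wlog_maj :: "real list \<Rightarrow> real list \<Rightarrow> bool" where
  "wlog_maj xs ys \<longleftrightarrow> length xs = length ys \<and>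
     (\<forall>k\<in>{1..length xs}. prod_list (take k (decr xs)) \<le> prod_list (take k (decr ys)))"

definition log_maj :: "real list \<Rightarrow> real list \<Rightarrow> bool" where
  "log_maj xs ys \<longleftrightarrow> wlog_maj xs ys \<and> prod_list xs = prod_list ys"

definition tilde :: "real list \<Rightarrow> real list" where
  "tilde zs = map (\<lambda>z. 1 + z) zs"

end

theory Submission
  imports Defs
begin

text \<open>
  Sort both vectors decreasingly. With weights \<open>w\<^sub>i = x\<^sub>i / (1 + x\<^sub>i)\<close>, strict concavity of
  \<open>ln\<close> gives \<open>w\<^sub>i (ln y\<^sub>i - ln x\<^sub>i) \<le> ln (1 + y\<^sub>i) - ln (1 + x\<^sub>i)\<close>, strictly when \<open>x\<^sub>i \<noteq> y\<^sub>i\<close>.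
  The weights decrease and the partial sums of \<open>ln y\<^sub>i - ln x\<^sub>i\<close> are nonnegative by weak
  log-majorization, so Abel summation makes \<open>\<Sum> w\<^sub>i (ln y\<^sub>i - ln x\<^sub>i)\<close> nonnegative.
  Applied to every prefix this yields weak log-majorization of the shifted vectors, and
  applied to the whole vectors a strict inequality of the full products, which rules out
  log-majorization.
\<close>

lemma ln_strict_concave_at_one:
  fixes w t :: real
  assumes "0 < w" "w < 1" "0 < t" "t \<noteq> 1"
  shows "w * ln t < ln (1 - w + w * t)"
proof -
  define m where "m = 1 - w + w * t"
  have "m - t = (1 - w) * (1 - t)" "m - 1 = w * (t - 1)"
    by (simp_all add: m_def algebra_simps)
  then have m: "0 < m" "t \<noteq> m" "1 \<noteq> m"
    using assms by (auto simp: m_def add_pos_pos)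
  \<comment> \<open>the tangent bound \<open>ln x - ln m < (x - m) / m\<close> at \<open>x = t\<close> and \<open>x = 1\<close>, averaged with weights \<open>w, 1 - w\<close>\<close>
  have "w * (ln t - ln m) < w * ((t - m) / m)"
    using ln_diff_less[OF \<open>0 < t\<close> \<open>0 < m\<close> \<open>t \<noteq> m\<close>] \<open>0 < w\<close>
    by (rule mult_strict_left_mono)
  moreover have "(1 - w) * (ln 1 - ln m) < (1 - w) * ((1 - m) / m)"
    using ln_diff_less[OF _ \<open>0 < m\<close> \<open>1 \<noteq> m\<close>] \<open>w < 1\<close>
    by (intro mult_strict_left_mono) simp_all
  moreover have "w * ((t - m) / m) + (1 - w) * ((1 - m) / m) = 0"
    using m by (simp add: m_def field_simps)
  ultimately show ?thesis
    by (simp add: m_def algebra_simps)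
qed

lemma weighted_ln_diff_le_ln_one_plus_diff:
  fixes a b :: real
  assumes "0 \<le> a" "0 \<le> b" "0 < a \<Longrightarrow> 0 < b"
  shows "a / (1 + a) * (ln b - ln a) \<le> ln (1 + b) - ln (1 + a)"
    and "a \<noteq> b \<Longrightarrow> a / (1 + a) * (ln b - ln a) < ln (1 + b) - ln (1 + a)"
proof -
  have strict: "a / (1 + a) * (ln b - ln a) < ln (1 + b) - ln (1 + a)" if "a \<noteq> b"
  proof (cases "a = 0")
    case True
    then show ?thesis
      using assms that by (simp add: ln_gt_zero)
  next
    case False
    then have "0 < a" "0 < b"
      using assms by auto
    have "a / (1 + a) * ln (b / a) < ln (1 - a / (1 + a) + a / (1 + a) * (b / a))"
      using \<open>0 < a\<close> \<open>0 < b\<close> that by (intro ln_strict_concave_at_one) (auto simp: field_simps)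
    also have "1 - a / (1 + a) + a / (1 + a) * (b / a) = (1 + b) / (1 + a)"
      using \<open>0 < a\<close> by (simp add: field_simps)
    finally show ?thesis
      using \<open>0 < a\<close> \<open>0 < b\<close> by (simp add: ln_div)
  qed
  then show "a \<noteq> b \<Longrightarrow> a / (1 + a) * (ln b - ln a) < ln (1 + b) - ln (1 + a)" .
  show "a / (1 + a) * (ln b - ln a) \<le> ln (1 + b) - ln (1 + a)"
    using strict by (cases "a = b") force+
qed

text \<open>Abel summation, with the partial sums needed only where the weight is positive.\<close>

lemma sum_mult_nonneg_if_partial_sums_nonneg:
  fixes w s :: "nat \<Rightarrow> real"
  assumes w_nonneg: "\<And>i. i < n \<Longrightarrow> 0 \<le> w i"
    and w_decr: "\<And>i. Suc i < n \<Longrightarrow> w (Suc i) \<le> w i"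
    and partial: "\<And>k. k < n \<Longrightarrow> 0 < w k \<Longrightarrow> 0 \<le> (\<Sum>i\<le>k. s i)"
  shows "0 \<le> (\<Sum>i<n. w i * s i)"
proof -
  have head_nonneg: "0 \<le> w k * (\<Sum>i\<le>k. s i)" if "k < n" for k
    using w_nonneg[OF that] partial[OF that] by (cases "w k = 0") auto
  have abel: "w k * (\<Sum>i\<le>k. s i) \<le> (\<Sum>i\<le>k. w i * s i)" if "k < n" for k
    using that
  proof (induction k)
    case 0
    then show ?case by simp
  next
    case (Suc k)
    have "w (Suc k) * (\<Sum>i\<le>k. s i) \<le> w k * (\<Sum>i\<le>k. s i)"
    proof (cases "0 \<le> (\<Sum>i\<le>k. s i)")
      case True
      then show ?thesis
        using w_decr[OF Suc.prems] by (rule mult_right_mono[rotated])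
    next
      case False
      then have "w k = 0"
        using partial[of k] w_nonneg[of k] Suc.prems by fastforce
      then have "w (Suc k) = 0"
        using w_decr[OF Suc.prems] w_nonneg[OF Suc.prems] by simp
      then show ?thesis
        using \<open>w k = 0\<close> by simp
    qed
    then have "w (Suc k) * (\<Sum>i\<le>Suc k. s i) \<le> w k * (\<Sum>i\<le>k. s i) + w (Suc k) * s (Suc k)"
      by (simp add: algebra_simps)
    also have "\<dots> \<le> (\<Sum>i\<le>Suc k. w i * s i)"
      using Suc by simp
    finally show ?case .
  qed
  show ?thesis
  proof (cases n)
    case (Suc m)
    then show ?thesis
      using head_nonneg[of m] abel[of m] by (simp add: lessThan_Suc_atMost)
  qed simp
qed

lemma prefix_prod_le_imp_pos:
  fixes a b :: "nat \<Rightarrow> real"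
  assumes a_antimono: "\<And>i j. i \<le> j \<Longrightarrow> j < n \<Longrightarrow> a j \<le> a i"
    and b_nonneg: "\<And>i. i < n \<Longrightarrow> 0 \<le> b i"
    and prefix: "\<And>k. k \<le> n \<Longrightarrow> (\<Prod>i<k. a i) \<le> (\<Prod>i<k. b i)"
    and "k < n" "0 < a k" "i \<le> k"
  shows "0 < a i" and "0 < b i"
proof -
  have a_pos: "0 < a j" if "j \<le> k" for j
    using a_antimono[of j k] that \<open>k < n\<close> \<open>0 < a k\<close> by simp
  then show "0 < a i"
    using \<open>i \<le> k\<close> .
  have "0 < (\<Prod>j\<le>k. a j)"
    using a_pos by (intro prod_pos) auto
  also have "\<dots> \<le> (\<Prod>j\<le>k. b j)"
    using prefix[of "Suc k"] \<open>k < n\<close> by (simp add: lessThan_Suc_atMost)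
  finally have "b i \<noteq> 0"
    using \<open>i \<le> k\<close> by (metis atMost_iff finite_atMost less_irrefl prod_zero)
  then show "0 < b i"
    using b_nonneg[of i] \<open>i \<le> k\<close> \<open>k < n\<close> by simp
qed

lemma prefix_prod_le_imp_prod_one_plus_le:
  fixes a b :: "nat \<Rightarrow> real"
  assumes a_antimono: "\<And>i j. i \<le> j \<Longrightarrow> j < n \<Longrightarrow> a j \<le> a i"
    and a_nonneg: "\<And>i. i < n \<Longrightarrow> 0 \<le> a i"
    and b_nonneg: "\<And>i. i < n \<Longrightarrow> 0 \<le> b i"
    and prefix: "\<And>k. k \<le> n \<Longrightarrow> (\<Prod>i<k. a i) \<le> (\<Prod>i<k. b i)"
  shows "(\<Prod>i<n. 1 + a i) \<le> (\<Prod>i<n. 1 + b i)"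
    and "j < n \<Longrightarrow> a j \<noteq> b j \<Longrightarrow> (\<Prod>i<n. 1 + a i) < (\<Prod>i<n. 1 + b i)"
proof -
  define w where "w i = a i / (1 + a i)" for i
  define s where "s i = ln (b i) - ln (a i)" for i
  define d where "d i = ln (1 + b i) - ln (1 + a i)" for i
  have pos: "0 < a i" "0 < b i" if "k < n" "0 < a k" "i \<le> k" for i k
    using prefix_prod_le_imp_pos[OF a_antimono b_nonneg prefix that] by simp_all
  have partial: "0 \<le> (\<Sum>i\<le>k. s i)" if "k < n" "0 < w k" for k
  proof -
    have "0 < a k"
      using that a_nonneg[of k] by (auto simp: w_def zero_less_divide_iff)
    then have "ln (\<Prod>i\<le>k. a i) = (\<Sum>i\<le>k. ln (a i))"
      and "ln (\<Prod>i\<le>k. b i) = (\<Sum>i\<le>k. ln (b i))"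
      using pos[OF \<open>k < n\<close>] by (intro ln_prod; force)+
    then have "(\<Sum>i\<le>k. s i) = ln (\<Prod>i\<le>k. b i) - ln (\<Prod>i\<le>k. a i)"
      by (simp add: s_def sum_subtractf)
    moreover have "(\<Prod>i\<le>k. a i) \<le> (\<Prod>i\<le>k. b i)"
      using prefix[of "Suc k"] \<open>k < n\<close> by (simp add: lessThan_Suc_atMost)
    moreover have "0 < (\<Prod>i\<le>k. a i)"
      using pos(1)[OF \<open>k < n\<close> \<open>0 < a k\<close>] by (intro prod_pos) auto
    ultimately show ?thesis
      by simp
  qed
  have abel: "0 \<le> (\<Sum>i<n. w i * s i)"
  proof (rule sum_mult_nonneg_if_partial_sums_nonneg)
    show "0 \<le> w i" if "i < n" for i
      using a_nonneg[OF that] by (simp add: w_def)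
    show "w (Suc i) \<le> w i" if "Suc i < n" for i
      using a_antimono[of i "Suc i"] a_nonneg[of "Suc i"] that by (simp add: w_def field_simps)
  qed (fact partial)
  have term_le: "w i * s i \<le> d i" and term_less: "a i \<noteq> b i \<Longrightarrow> w i * s i < d i"
    if "i < n" for i
  proof -
    have "0 < a i \<Longrightarrow> 0 < b i"
      using pos[OF that _ order_refl] by simp
    then show "w i * s i \<le> d i" and "a i \<noteq> b i \<Longrightarrow> w i * s i < d i"
      unfolding w_def s_def d_def
      using weighted_ln_diff_le_ln_one_plus_diff a_nonneg[OF that] b_nonneg[OF that] by simp_all
  qed
  have pos_a: "0 < (\<Prod>i<n. 1 + a i)" and pos_b: "0 < (\<Prod>i<n. 1 + b i)"
    using a_nonneg b_nonneg by (auto intro!: prod_pos simp: add_pos_nonneg)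
  have sum_d: "(\<Sum>i<n. d i) = ln (\<Prod>i<n. 1 + b i) - ln (\<Prod>i<n. 1 + a i)"
  proof -
    have "ln (\<Prod>i<n. 1 + a i) = (\<Sum>i<n. ln (1 + a i))"
      and "ln (\<Prod>i<n. 1 + b i) = (\<Sum>i<n. ln (1 + b i))"
      using a_nonneg b_nonneg by (intro ln_prod; force)+
    then show ?thesis
      by (simp add: d_def sum_subtractf)
  qed
  have "(\<Sum>i<n. w i * s i) \<le> (\<Sum>i<n. d i)"
    using term_le by (intro sum_mono) simp
  then have "ln (\<Prod>i<n. 1 + a i) \<le> ln (\<Prod>i<n. 1 + b i)"
    using abel sum_d by linarith
  then show "(\<Prod>i<n. 1 + a i) \<le> (\<Prod>i<n. 1 + b i)"
    using pos_a pos_b by simp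
  assume "j < n" "a j \<noteq> b j"
  then have "(\<Sum>i<n. w i * s i) < (\<Sum>i<n. d i)"
    using term_le term_less by (intro sum_strict_mono_ex1) auto
  then have "ln (\<Prod>i<n. 1 + a i) < ln (\<Prod>i<n. 1 + b i)"
    using abel sum_d by linarith
  then show "(\<Prod>i<n. 1 + a i) < (\<Prod>i<n. 1 + b i)"
    using pos_a pos_b by simp
qed

lemma prod_list_take_conv_prod_nth:
  "k \<le> length xs \<Longrightarrow> prod_list (take k (xs :: 'a :: comm_monoid_mult list)) = (\<Prod>i<k. xs ! i)"
  by (simp add: prod.list_conv_set_nth atLeast0LessThan min_def)

lemma length_decr [simp]: "length (decr xs) = length xs"
  by (simp add: decr_def)

lemma mset_decr [simp]: "mset (decr xs) = mset xs"
  by (simp add: decr_def)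

lemma decr_nth_antimono:
  assumes "i \<le> j" "j < length xs"
  shows "decr xs ! j \<le> decr xs ! i"
proof -
  have "sorted_wrt (\<ge>) (decr xs)"
    by (simp add: decr_def sorted_wrt_rev)
  then show ?thesis
    using assms sorted_wrt_nth_less[of "(\<ge>)" "decr xs" i j] by (cases "i = j") auto
qed

lemma decr_nth_nonneg:
  assumes "\<forall>x\<in>set xs. 0 \<le> x" "i < length xs"
  shows "0 \<le> decr xs ! i"
  using assms nth_mem[of i "decr xs"] by (simp flip: set_mset_mset)

lemma length_tilde [simp]: "length (tilde xs) = length xs"
  by (simp add: tilde_def)

lemma decr_tilde: "decr (tilde xs) = tilde (decr xs)"
proof -
  have "sort (map ((+) 1) xs) = map ((+) 1) (sort xs)"
    by (rule properties_for_sort) (auto simp: sorted_map)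
  then show ?thesis
    by (simp add: decr_def tilde_def rev_map)
qed

lemma prod_list_take_tilde:
  "k \<le> length xs \<Longrightarrow> prod_list (take k (tilde xs)) = (\<Prod>i<k. 1 + xs ! i)"
  by (simp add: tilde_def prod_list_take_conv_prod_nth)

lemma prod_list_tilde_decr: "prod_list (tilde (decr xs)) = prod_list (tilde xs)"
  by (metis mset_decr mset_map prod_mset_prod_list tilde_def)

lemma wlog_maj_prefix_prod_decr:
  assumes "wlog_maj xs ys" "k \<le> length xs"
  shows "(\<Prod>i<k. decr xs ! i) \<le> (\<Prod>i<k. decr ys ! i)"
  using assms by (cases "k = 0") (auto simp: wlog_maj_def simp flip: prod_list_take_conv_prod_nth)

lemma wlog_maj_decr_prod_one_plus:
  assumes "wlog_maj xs ys" "\<forall>x\<in>set xs. 0 \<le> x" "\<forall>y\<in>set ys. 0 \<le> y" "k \<le> length xs"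
  shows "(\<Prod>i<k. 1 + decr xs ! i) \<le> (\<Prod>i<k. 1 + decr ys ! i)"
    and "j < k \<Longrightarrow> decr xs ! j \<noteq> decr ys ! j
           \<Longrightarrow> (\<Prod>i<k. 1 + decr xs ! i) < (\<Prod>i<k. 1 + decr ys ! i)"
proof -
  have "length ys = length xs"
    using assms(1) by (simp add: wlog_maj_def)
  have antimono: "decr xs ! j \<le> decr xs ! i" if "i \<le> j" "j < k" for i j
    using decr_nth_antimono that assms(4) by simp
  have nonneg: "0 \<le> decr xs ! i" "0 \<le> decr ys ! i" if "i < k" for i
    using decr_nth_nonneg assms(2-4) that \<open>length ys = length xs\<close> by simp_all
  have prefix: "(\<Prod>i<l. decr xs ! i) \<le> (\<Prod>i<l. decr ys ! i)" if "l \<le> k" for l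
    using wlog_maj_prefix_prod_decr assms(1,4) that by simp
  show "(\<Prod>i<k. 1 + decr xs ! i) \<le> (\<Prod>i<k. 1 + decr ys ! i)"
    and "j < k \<Longrightarrow> decr xs ! j \<noteq> decr ys ! j
           \<Longrightarrow> (\<Prod>i<k. 1 + decr xs ! i) < (\<Prod>i<k. 1 + decr ys ! i)"
    using prefix_prod_le_imp_prod_one_plus_le[OF antimono nonneg prefix] by blast+
qed

lemma wlog_maj_tilde:
  assumes "wlog_maj xs ys" "\<forall>x\<in>set xs. 0 \<le> x" "\<forall>y\<in>set ys. 0 \<le> y"
  shows "wlog_maj (tilde xs) (tilde ys)"
proof -
  have len: "length ys = length xs"
    using assms(1) by (simp add: wlog_maj_def)
  moreover have "prod_list (take k (decr (tilde xs))) \<le> prod_list (take k (decr (tilde ys)))"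
    if "k \<le> length xs" for k
    using wlog_maj_decr_prod_one_plus(1)[OF assms that] that len
    by (simp add: decr_tilde prod_list_take_tilde)
  ultimately show ?thesis
    by (simp add: wlog_maj_def)
qed

lemma wlog_maj_prod_list_tilde_less:
  assumes "wlog_maj xs ys" "\<forall>x\<in>set xs. 0 \<le> x" "\<forall>y\<in>set ys. 0 \<le> y"
    and "mset xs \<noteq> mset ys"
  shows "prod_list (tilde xs) < prod_list (tilde ys)"
proof -
  have len: "length ys = length xs"
    using assms(1) by (simp add: wlog_maj_def)
  have "decr xs \<noteq> decr ys"
    using assms(4) by (metis mset_decr)
  then obtain j where "j < length xs" "decr xs ! j \<noteq> decr ys ! j"
    using len nth_equalityI[of "decr xs" "decr ys"] by auto
  then have "(\<Prod>i<length xs. 1 + decr xs ! i) < (\<Prod>i<length xs. 1 + decr ys ! i)"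
    by (rule wlog_maj_decr_prod_one_plus(2)[OF assms(1-3) order_refl])
  moreover have "prod_list (tilde zs) = (\<Prod>i<length zs. 1 + decr zs ! i)" for zs
    using prod_list_take_tilde[of "length zs" "decr zs"] by (simp add: prod_list_tilde_decr)
  ultimately show ?thesis
    using len by simp
qed

theorem lemma4:
  fixes x y :: "real list" and n :: nat
  assumes "length x = n" and "length y = n"
    and "\<forall>i<n. x ! i \<ge> 0" and "\<forall>i<n. y ! i \<ge> 0"
    and "mset x \<noteq> mset y"
    and "log_maj x y"
  shows "wlog_maj (tilde x) (tilde y) \<and> \<not> log_maj (tilde x) (tilde y)
         \<and> (\<Prod>k<n. 1 + x ! k) < (\<Prod>k<n. 1 + y ! k)"
proof -
  have wlog: "wlog_maj x y"
    using \<open>log_maj x y\<close> by (simp add: log_maj_def)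
  have nonneg: "\<forall>u\<in>set x. 0 \<le> u" "\<forall>v\<in>set y. 0 \<le> v"
    using assms(1-4) by (auto simp: in_set_conv_nth)
  have "prod_list (tilde x) < prod_list (tilde y)"
    using wlog_maj_prod_list_tilde_less[OF wlog nonneg \<open>mset x \<noteq> mset y\<close>] .
  moreover have "prod_list (tilde x) = (\<Prod>k<n. 1 + x ! k)"
    and "prod_list (tilde y) = (\<Prod>k<n. 1 + y ! k)"
    using prod_list_take_tilde[of n x] prod_list_take_tilde[of n y] assms(1,2)
    by (simp_all add: tilde_def)
  ultimately show ?thesis
    using wlog_maj_tilde[OF wlog nonneg] by (simp add: log_maj_def)
qed

end
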